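(* Let $m\ge 1$ and let $s_1,\dots,s_{2m}$ be positive integers. Put $S=\sum_{i=1}^{2m}s_i$, $s_{\max}=\max_i s_i$, $M=S+1$, $d_i=s_{\max}-s_i$, and $\epsilon=\frac{1}{2M}$. Let $$P_R=\Big\{x\in\mathbb{R}^{2m}:\ 0\le x_i\le 1\ \forall i,\ \sum_{i=1}^{2m}(M+s_i)x_i\le \tfrac12 S+mM+\epsilon,\ \sum_{i=1}^{2m}(M+d_i)x_i\le \tfrac12\sum_{i=1}^{2m}d_i+mM+\epsilon\Big\}.$$ Let $v$ be a vertex of $P_R$ having exactly $2m-1$ coordinates in $\{0,1\}$ (i.e. lying on exactly $2m-1$ of the box constraints $0\le x_i\le 1$), and suppose $|\{i: v_i=1\}|=m-1$. Then $v$ is not degenerate, i.e. at most $2m$ of the $4m+2$ defining inequalities of $P_R$ are active at $v$ (equivalently, the two knapsack inequalities are not both active at $v$).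
   Context: The inequalities $0\le x_i\le1$ are the box constraints; the other two inequalities are the knapsack constraints. A vertex of $P_R$ is degenerate if more than $2m$ of the defining inequalities are active at it. *)

theory Defs
  imports "HOL-Analysis.Analysis"
begin

definition sumS :: "('n::finite \<Rightarrow> nat) \<Rightarrow> real" where
  "sumS s = real (\<Sum>i\<in>UNIV. s i)"

definition smax :: "('n::finite \<Rightarrow> nat) \<Rightarrow> nat" where
  "smax s = Max (range s)"

definition dd :: "('n::finite \<Rightarrow> nat) \<Rightarrow> 'n \<Rightarrow> real" where
  "dd s i = real (smax s) - real (s i)"

definition bigM :: "('n::finite \<Rightarrow> nat) \<Rightarrow> real" where
  "bigM s = sumS s + 1"

definition eps :: "('n::finite \<Rightarrow> nat) \<Rightarrow> real" where
  "eps s = 1 / (2 * bigM s)"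

definition knap1_lhs :: "('n::finite \<Rightarrow> nat) \<Rightarrow> real^'n \<Rightarrow> real" where
  "knap1_lhs s x = (\<Sum>i\<in>UNIV. (bigM s + real (s i)) * x $ i)"

definition knap1_rhs :: "nat \<Rightarrow> ('n::finite \<Rightarrow> nat) \<Rightarrow> real" where
  "knap1_rhs m s = sumS s / 2 + real m * bigM s + eps s"

definition knap2_lhs :: "('n::finite \<Rightarrow> nat) \<Rightarrow> real^'n \<Rightarrow> real" where
  "knap2_lhs s x = (\<Sum>i\<in>UNIV. (bigM s + dd s i) * x $ i)"

definition knap2_rhs :: "nat \<Rightarrow> ('n::finite \<Rightarrow> nat) \<Rightarrow> real" where
  "knap2_rhs m s = (\<Sum>i\<in>UNIV. dd s i) / 2 + real m * bigM s + eps s"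

definition PR :: "nat \<Rightarrow> ('n::finite \<Rightarrow> nat) \<Rightarrow> (real^'n) set" where
  "PR m s = {x. (\<forall>i. 0 \<le> x $ i \<and> x $ i \<le> 1)
              \<and> knap1_lhs s x \<le> knap1_rhs m s
              \<and> knap2_lhs s x \<le> knap2_rhs m s}"

definition num_active :: "nat \<Rightarrow> ('n::finite \<Rightarrow> nat) \<Rightarrow> real^'n \<Rightarrow> nat" where
  "num_active m s x = card {i. x $ i = 0} + card {i. x $ i = 1}
     + (if knap1_lhs s x = knap1_rhs m s then 1 else 0)
     + (if knap2_lhs s x = knap2_rhs m s then 1 else 0)"

end

theory Submission
  imports Defs
begin

text \<open>Since d_i = s_max - s_i, the left-hand sides of the two knapsack constraints
  add up to (2M + s_max) \<Sum> x_i and the right-hand sides to (2M + s_max) m + 2\<epsilon>.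
  At v there are m - 1 ones, one fractional coordinate and otherwise zeros, so
  \<Sum> v_i \<le> m and the sum of the two constraints is slack by at least 2\<epsilon> > 0; hence
  at most one of them is active.\<close>

lemma bigM_pos: "bigM s > 0"
  unfolding bigM_def sumS_def by (simp add: add_nonneg_pos sum_nonneg)

lemma eps_pos: "eps s > 0"
  using bigM_pos[of s] unfolding eps_def by simp

lemma knap_lhs_add:
  "knap1_lhs s x + knap2_lhs s x = (2 * bigM s + real (smax s)) * (\<Sum>i\<in>UNIV. x $ i)"
proof -
  have "knap1_lhs s x + knap2_lhs s x = (\<Sum>i\<in>UNIV. (2 * bigM s + real (smax s)) * x $ i)"
    unfolding knap1_lhs_def knap2_lhs_def dd_def sum.distrib[symmetric]
    by (rule sum.cong) (auto simp: algebra_simps)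
  then show ?thesis by (simp add: sum_distrib_left)
qed

lemma knap_rhs_add:
  fixes s :: "'n::finite \<Rightarrow> nat"
  assumes "CARD('n) = 2 * m"
  shows "knap1_rhs m s + knap2_rhs m s = (2 * bigM s + real (smax s)) * real m + 2 * eps s"
proof -
  have "(\<Sum>i\<in>UNIV. dd s i) = real (2 * m) * real (smax s) - sumS s"
    unfolding dd_def sumS_def using assms by (simp add: sum_subtractf)
  then show ?thesis
    unfolding knap1_rhs_def knap2_rhs_def by (simp add: algebra_simps add_divide_distrib[symmetric])
qed

lemma not_both_knaps_active:
  fixes s :: "'n::finite \<Rightarrow> nat" and x :: "real^'n"
  assumes "CARD('n) = 2 * m" and "(\<Sum>i\<in>UNIV. x $ i) \<le> real m"
  shows "\<not> (knap1_lhs s x = knap1_rhs m s \<and> knap2_lhs s x = knap2_rhs m s)"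
proof -
  have "0 \<le> 2 * bigM s + real (smax s)" using bigM_pos[of s] by simp
  then have "knap1_lhs s x + knap2_lhs s x \<le> (2 * bigM s + real (smax s)) * real m"
    unfolding knap_lhs_add by (rule mult_left_mono[OF assms(2)])
  also have "\<dots> < knap1_rhs m s + knap2_rhs m s"
    unfolding knap_rhs_add[OF assms(1)] using eps_pos[of s] by simp
  finally show ?thesis by auto
qed

lemma sum_le_card_ones_add_card_fractional:
  fixes f :: "'a::finite \<Rightarrow> real"
  assumes "\<And>i. 0 \<le> f i \<and> f i \<le> 1"
  shows "(\<Sum>i\<in>UNIV. f i) \<le> card {i. f i = 1} + card {i. f i \<notin> {0, 1}}"
proof -
  have "(\<Sum>i\<in>UNIV. f i) \<le> (\<Sum>i\<in>UNIV. of_bool (f i = 1) + of_bool (f i \<notin> {0, 1}))"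
    by (rule sum_mono) (use assms in auto)
  then show ?thesis by (simp add: sum.distrib)
qed

lemma card_zeros_add_card_ones:
  fixes f :: "'a::finite \<Rightarrow> real"
  shows "card {i. f i = 0} + card {i. f i = 1} = card {i. f i \<in> {0, 1}}"
proof -
  have "{i. f i \<in> {0, 1}} = {i. f i = 0} \<union> {i. f i = 1}" by auto
  then show ?thesis by (simp add: card_Un_disjoint disjoint_iff)
qed

lemma card_not_in_eq:
  fixes P :: "'a::finite \<Rightarrow> bool"
  shows "card {i. \<not> P i} = CARD('a) - card {i. P i}"
proof -
  have "{i. \<not> P i} = UNIV - {i. P i}" by auto
  then show ?thesis by (simp add: card_Diff_subset)
qed

theorem lemma2:
  fixes m :: nat and s :: "'n::finite \<Rightarrow> nat" and v :: "real^'n"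
  assumes "m \<ge> 1" and "CARD('n) = 2 * m"
    and "\<forall>i. s i > 0"
    and "v extreme_point_of (PR m s)"
    and "card {i. v $ i \<in> {0, 1}} = 2 * m - 1"
    and "card {i. v $ i = 1} = m - 1"
  shows "num_active m s v \<le> 2 * m"
proof -
  have "v \<in> PR m s" using assms(4) by (simp add: extreme_point_of_def)
  then have box: "\<And>i. 0 \<le> v $ i \<and> v $ i \<le> 1" by (simp add: PR_def)
  have "card {i. v $ i \<notin> {0, 1}} = 1"
    using card_not_in_eq[of "\<lambda>i. v $ i \<in> {0, 1}"] assms(1,2,5) by simp
  then have "(\<Sum>i\<in>UNIV. v $ i) \<le> real m"
    using sum_le_card_ones_add_card_fractional[of "($) v", OF box] assms(1,6) by simp
  then have "\<not> (knap1_lhs s v = knap1_rhs m s \<and> knap2_lhs s v = knap2_rhs m s)"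
    by (rule not_both_knaps_active[OF assms(2)])
  then show ?thesis
    unfolding num_active_def card_zeros_add_card_ones assms(5) using assms(1) by auto
qed

end
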